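(* Let $R$ be an integral domain, let $\delta,\gamma,p,q\in R$ with $2\gamma=p\delta$, and let $a=\mathcal{W}(\delta,\gamma,p,q)$. Then $L^{(-1,p)}(a)=a$, i.e. for all $n\ge0$ $$a_n=\sum_{i=0}^n\binom{n}{i}(-1)^ip^{n-i}a_i,$$ and consequently, for all $n\ge1$, $$\sum_{i=0}^{n-1}\binom{n}{i}(-1)^ip^{n-i}a_i=\begin{cases}0,& n \text{ even},\\ 2a_n,& n\text{ odd}.\end{cases}$$
   Context: $\mathcal{W}(\delta,\gamma,p,q)$ denotes the sequence $(a_n)_{n\ge0}$ with $a_0=\delta$, $a_1=\gamma$, $a_n=pa_{n-1}-qa_{n-2}$ for $n\ge2$. For $h,y\in R$, $L^{(h,y)}(a)$ is the sequence with $n$-th term $\sum_{i=0}^n\binom{n}{i}h^iy^{n-i}a_i$. *)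

theory Defs
  imports Main
begin

fun W :: "'a::comm_ring_1 \<Rightarrow> 'a \<Rightarrow> 'a \<Rightarrow> 'a \<Rightarrow> nat \<Rightarrow> 'a" where
  "W d g p q 0 = d"
| "W d g p q (Suc 0) = g"
| "W d g p q (Suc (Suc n)) = p * W d g p q (Suc n) - q * W d g p q n"

definition L :: "'a::comm_ring_1 \<Rightarrow> 'a \<Rightarrow> (nat \<Rightarrow> 'a) \<Rightarrow> nat \<Rightarrow> 'a" where
  "L h y a n = (\<Sum>i=0..n. of_nat (n choose i) * h ^ i * y ^ (n - i) * a i)"

end

theory Submission
  imports Defs
begin

text \<open>Let D f k = p * f k - f (k + 1). Expanding D^n binomially shows that
  L^(-1,p) a n = (D^n a) 0. The operator D maps solutions of x(k+2) = p x(k+1) - q x(k) to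
  solutions, and on such a solution g one has D (D g) = p D g - q g. Hence c n = (D^n a) 0
  satisfies the recurrence of a, with c 0 = \<delta> and c 1 = p \<delta> - \<gamma> = \<gamma>, so c = a.
  The second identity is the first with the top term (-1)^n a n moved across.\<close>

lemma sum_atLeast0_atMost_pred:
  fixes f :: "nat \<Rightarrow> 'a::ab_group_add"
  assumes "n \<ge> 1"
  shows "(\<Sum>i=0..n-1. f i) = (\<Sum>i=0..n. f i) - f n"
proof -
  obtain m where "n = Suc m" using assms by (cases n) auto
  then show ?thesis by (simp add: sum.atLeast0_atMost_Suc)
qed

definition shift_diff :: "'a::comm_ring_1 \<Rightarrow> (nat \<Rightarrow> 'a) \<Rightarrow> nat \<Rightarrow> 'a" where
  "shift_diff p f k = p * f k - f (Suc k)"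

lemma funpow_shift_diff_eq_sum:
  fixes p :: "'a::comm_ring_1"
  shows "(shift_diff p ^^ n) f k
    = (\<Sum>i\<le>n. of_nat (n choose i) * (-1) ^ i * p ^ (n - i) * f (k + i))"
proof (induction n arbitrary: k)
  case 0
  then show ?case by simp
next
  case (Suc n)
  let ?t = "\<lambda>m i. of_nat (m choose i) * (-1) ^ i * p ^ (m - i) * f (k + i)"
  have low: "p * (\<Sum>i\<le>n. ?t n i)
      = ?t (Suc n) 0 + (\<Sum>i<n. of_nat (n choose Suc i) * (-1) ^ Suc i * p ^ (n - i) * f (k + Suc i))"
  proof -
    have "p * (\<Sum>i\<le>n. ?t n i)
        = (\<Sum>i\<le>n. of_nat (n choose i) * (-1) ^ i * p ^ (Suc n - i) * f (k + i))"
      by (auto simp: sum_distrib_left Suc_diff_le algebra_simps intro: sum.cong)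
    also have "\<dots>
        = ?t (Suc n) 0 + (\<Sum>i<n. of_nat (n choose Suc i) * (-1) ^ Suc i * p ^ (n - i) * f (k + Suc i))"
      by (cases n) (simp_all only: sum.atMost_Suc_shift lessThan_Suc_atMost, auto)
    finally show ?thesis .
  qed
  have high: "(\<Sum>i<n. of_nat (n choose Suc i) * (-1) ^ Suc i * p ^ (n - i) * f (k + Suc i))
      = (\<Sum>i\<le>n. of_nat (n choose Suc i) * (-1) ^ Suc i * p ^ (Suc n - Suc i) * f (k + Suc i))"
    by (simp add: lessThan_Suc_atMost[symmetric] binomial_eq_0)
  have "(shift_diff p ^^ Suc n) f k = p * (\<Sum>i\<le>n. ?t n i)
      - (\<Sum>i\<le>n. of_nat (n choose i) * (-1) ^ i * p ^ (n - i) * f (Suc k + i))"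
    by (simp add: shift_diff_def Suc.IH)
  also have "\<dots> = ?t (Suc n) 0 + (\<Sum>i\<le>n. ?t (Suc n) (Suc i))"
    unfolding low high
    by (simp add: sum_subtractf[symmetric] sum.distrib[symmetric] algebra_simps)
  also have "\<dots> = (\<Sum>i\<le>Suc n. ?t (Suc n) i)"
    by (rule sum.atMost_Suc_shift[symmetric])
  finally show ?case .
qed

definition horadam_rec :: "'a::comm_ring_1 \<Rightarrow> 'a \<Rightarrow> (nat \<Rightarrow> 'a) \<Rightarrow> bool" where
  "horadam_rec p q g \<longleftrightarrow> (\<forall>k. g (Suc (Suc k)) = p * g (Suc k) - q * g k)"

lemma horadam_rec_W: "horadam_rec p q (W d g p q)"
  by (simp add: horadam_rec_def)

lemma eq_W_if_horadam_rec:
  assumes rec: "horadam_rec p q c" and "c 0 = d" "c 1 = g"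
  shows "c n = W d g p q n"
proof -
  have "c n = W d g p q n \<and> c (Suc n) = W d g p q (Suc n)"
  proof (induction n)
    case 0
    then show ?case using assms by simp
  next
    case (Suc n)
    then show ?case using rec by (simp add: horadam_rec_def)
  qed
  then show ?thesis ..
qed

lemma horadam_rec_shift_diff:
  assumes "horadam_rec p q g"
  shows "horadam_rec p q (shift_diff p g)"
  unfolding horadam_rec_def
proof
  fix k
  have rec2: "g (Suc (Suc k)) = p * g (Suc k) - q * g k"
    and rec3: "g (Suc (Suc (Suc k))) = p * g (Suc (Suc k)) - q * g (Suc k)"
    using assms by (simp_all add: horadam_rec_def)
  show "shift_diff p g (Suc (Suc k)) = p * shift_diff p g (Suc k) - q * shift_diff p g k"
    unfolding shift_diff_def rec3 rec2 by (simp add: algebra_simps)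
qed

lemma horadam_rec_funpow_shift_diff:
  assumes "horadam_rec p q g"
  shows "horadam_rec p q ((shift_diff p ^^ n) g)"
  by (induction n) (simp_all add: assms horadam_rec_shift_diff)

lemma shift_diff_shift_diff:
  assumes "horadam_rec p q g"
  shows "shift_diff p (shift_diff p g) k = p * shift_diff p g k - q * g k"
  using assms by (simp add: horadam_rec_def shift_diff_def algebra_simps)

lemma funpow_shift_diff_W_at_0:
  assumes "2 * \<gamma> = p * \<delta>"
  shows "(shift_diff p ^^ n) (W \<delta> \<gamma> p q) 0 = W \<delta> \<gamma> p q n"
proof (rule eq_W_if_horadam_rec)
  let ?a = "W \<delta> \<gamma> p q"
  show "horadam_rec p q (\<lambda>n. (shift_diff p ^^ n) ?a 0)"
    unfolding horadam_rec_def
  proof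
    fix n
    show "(shift_diff p ^^ Suc (Suc n)) ?a 0
        = p * (shift_diff p ^^ Suc n) ?a 0 - q * (shift_diff p ^^ n) ?a 0"
      using shift_diff_shift_diff[OF horadam_rec_funpow_shift_diff[OF horadam_rec_W]]
      by (simp only: funpow.simps comp_apply)
  qed
  show "(shift_diff p ^^ 1) ?a 0 = \<gamma>"
    using assms by (simp add: shift_diff_def mult_2 algebra_simps)
qed simp

lemma L_neg_one_W:
  assumes "2 * \<gamma> = p * \<delta>"
  shows "L (-1) p (W \<delta> \<gamma> p q) = W \<delta> \<gamma> p q"
proof
  fix n
  have "L (-1) p (W \<delta> \<gamma> p q) n = (shift_diff p ^^ n) (W \<delta> \<gamma> p q) 0"
    by (simp add: L_def atLeast0AtMost funpow_shift_diff_eq_sum)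
  also have "\<dots> = W \<delta> \<gamma> p q n"
    using assms by (rule funpow_shift_diff_W_at_0)
  finally show "L (-1) p (W \<delta> \<gamma> p q) n = W \<delta> \<gamma> p q n" .
qed

theorem mainTheorem8:
  fixes \<delta> \<gamma> p q :: "'a::idom"
  assumes "2 * \<gamma> = p * \<delta>"
  defines "a \<equiv> W \<delta> \<gamma> p q"
  shows "L (-1) p a = a
    \<and> (\<forall>n. a n = (\<Sum>i=0..n. of_nat (n choose i) * (-1) ^ i * p ^ (n - i) * a i))
    \<and> (\<forall>n\<ge>1. (\<Sum>i=0..n-1. of_nat (n choose i) * (-1) ^ i * p ^ (n - i) * a i)
                 = (if even n then 0 else 2 * a n))"
proof (intro conjI allI impI)
  show "L (-1) p a = a"
    unfolding a_def using assms(1) by (rule L_neg_one_W)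
  then show full: "a n = (\<Sum>i=0..n. of_nat (n choose i) * (-1) ^ i * p ^ (n - i) * a i)" for n
    by (metis L_def)
  fix n :: nat
  assume "n \<ge> 1"
  have "(\<Sum>i=0..n-1. of_nat (n choose i) * (-1) ^ i * p ^ (n - i) * a i) = a n - (-1) ^ n * a n"
    unfolding sum_atLeast0_atMost_pred[OF \<open>n \<ge> 1\<close>]
    by (simp only: full[of n, symmetric] binomial_n_n diff_self_eq_0 power_0 of_nat_1
        mult.right_neutral mult.left_neutral)
  then show "(\<Sum>i=0..n-1. of_nat (n choose i) * (-1) ^ i * p ^ (n - i) * a i)
      = (if even n then 0 else 2 * a n)"
    by (cases "even n") (simp_all only: if_True if_False neg_one_even_power neg_one_odd_power
        mult_1 mult_minus1 diff_self diff_minus_eq_add mult_2 not_False_eq_True)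
qed

end
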